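(* Let $\Phi$ be a (crystallographic) root system with affine Weyl group $\widetilde W$, let $\Lambda=\langle\Phi^\vee\rangle$ be the coroot lattice, and let $T=\mathfrak h/\Lambda$, where $\mathfrak h$ is a Cartan subalgebra of the semisimple complex Lie algebra associated to $\Phi$. For each positive root $\alpha\in\Phi^+$ let $e^\alpha:T\to\mathbb C/\mathbb Z\cong\mathbb C^*$ be the character induced by $\alpha$. Then the toric arrangement $\mathcal T_{\widetilde W}=\{H_{e^\alpha}\mid \alpha\in\Phi^+\}$, $H_{e^\alpha}=\{t\in T\mid e^\alpha(t)=1\}$, is thick.
   Context: The universal covering is $\pi:\mathfrak h\to\mathfrak h/\Lambda=T$; its real part $\pi:V_{\mathbb R}\to T_{\mathbb R}$ and the associated periodic real affine arrangement $\mathcal A_{X,\mathbb R}$ (all real hyperplanes whose complexification maps onto some $H_{e^\alpha}$; here it is the arrangement of reflection hyperplanes of $\widetilde W$) are defined as usual. A chamber of $\mathcal A_{X,\mathbb R}$ is a connected component of the complement of its hyperplanes in $V_{\mathbb R}$. Definition: a toric arrangement is thick if $\pi$ is injective on the closure of every chamber of the associated real affine arrangement $\mathcal A_{X,\mathbb R}$. *)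

theory Defs
  imports "HOL-Analysis.Analysis"
begin

text \<open>The real form V_R of the Cartan subalgebra is modelled by a Euclidean space 'a,
  identified with its dual via the inner product (invariant form).\<close>

definition reflection :: "'a::euclidean_space \<Rightarrow> 'a \<Rightarrow> 'a" where
  "reflection \<alpha> v = v - ((2 * (v \<bullet> \<alpha>)) / (\<alpha> \<bullet> \<alpha>)) *\<^sub>R \<alpha>"

definition coroot :: "'a::euclidean_space \<Rightarrow> 'a" where
  "coroot \<alpha> = (2 / (\<alpha> \<bullet> \<alpha>)) *\<^sub>R \<alpha>"

definition root_system :: "'a::euclidean_space set \<Rightarrow> bool" where
  "root_system \<Phi> \<longleftrightarrow>
     finite \<Phi> \<and> 0 \<notin> \<Phi> \<and> span \<Phi> = UNIV \<and>
     (\<forall>\<alpha>\<in>\<Phi>. \<forall>\<beta>\<in>\<Phi>. reflection \<alpha> \<beta> \<in> \<Phi>) \<and>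
     (\<forall>\<alpha>\<in>\<Phi>. \<forall>\<beta>\<in>\<Phi>. (2 * (\<beta> \<bullet> \<alpha>)) / (\<alpha> \<bullet> \<alpha>) \<in> \<int>) \<and>
     (\<forall>\<alpha>\<in>\<Phi>. \<forall>c::real. c *\<^sub>R \<alpha> \<in> \<Phi> \<longrightarrow> c = 1 \<or> c = -1)"

definition positive_system :: "'a::euclidean_space set \<Rightarrow> 'a set \<Rightarrow> bool" where
  "positive_system \<Phi> P \<longleftrightarrow>
     (\<exists>v. (\<forall>\<alpha>\<in>\<Phi>. v \<bullet> \<alpha> \<noteq> 0) \<and> P = {\<alpha>\<in>\<Phi>. v \<bullet> \<alpha> > 0})"

definition coroot_lattice :: "'a::euclidean_space set \<Rightarrow> 'a set" where
  "coroot_lattice \<Phi> =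
     {x. \<exists>c::'a \<Rightarrow> int. x = (\<Sum>\<alpha>\<in>\<Phi>. of_int (c \<alpha>) *\<^sub>R coroot \<alpha>)}"

text \<open>Real affine arrangement associated to the toric arrangement {H_{e^alpha} | alpha in P}:
  the real parts of the components of the preimages of H_{e^alpha}, i.e. the hyperplanes
  alpha(x) = k, k an integer.\<close>
definition real_affine_arrangement :: "'a::euclidean_space set \<Rightarrow> 'a set set" where
  "real_affine_arrangement P = {{x. \<alpha> \<bullet> x = of_int k} | \<alpha> k. \<alpha> \<in> P}"

definition chambers :: "'a::euclidean_space set set \<Rightarrow> 'a set set" where
  "chambers \<A> = components (UNIV - \<Union>\<A>)"

text \<open>Thickness: the projection V_R \<rightarrow> V_R / \<Lambda> is injective on the closure of every chamber.\<close>
definition thick :: "'a::euclidean_space set \<Rightarrow> 'a set \<Rightarrow> bool" where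
  "thick \<Lambda> P \<longleftrightarrow>
     (\<forall>C\<in>chambers (real_affine_arrangement P).
        \<forall>x\<in>closure C. \<forall>y\<in>closure C. x - y \<in> \<Lambda> \<longrightarrow> x = y)"

end

theory Submission
  imports Defs
begin

text \<open>Let \<open>x, y\<close> lie in the closure of a chamber with \<open>x - y\<close> in the coroot lattice. Every
  positive root is confined to a strip \<open>k \<le> \<alpha> \<le> k + 1\<close> on the chamber, so \<open>\<bar>\<alpha>(x - y)\<bar> \<le> 1\<close>
  for all roots. Writing \<open>l = x - y\<close> as a sum of coroots, \<open>l \<bullet> l > 0\<close> would give a summand
  \<open>\<beta>\<^sup>\<or>\<close> with \<open>\<beta>(l) > 0\<close>, hence \<open>\<beta>(l) = 1\<close> by integrality; then \<open>s\<^sub>\<beta> l = l - \<beta>\<^sup>\<or>\<close> is a shorter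
  sum of coroots with the same bound, which is zero by induction, forcing \<open>\<beta>(l) = \<beta>(\<beta>\<^sup>\<or>) = 2\<close>.\<close>

lemma inner_sum_list_left:
  "sum_list (map f xs) \<bullet> (x::'a::real_inner) = (\<Sum>b\<leftarrow>xs. f b \<bullet> x)"
  by (induction xs) (simp_all add: inner_add_left)

lemma inner_sum_list_right:
  "(x::'a::real_inner) \<bullet> sum_list (map f xs) = (\<Sum>b\<leftarrow>xs. x \<bullet> f b)"
  by (induction xs) (simp_all add: inner_add_right)

lemma Ints_sum_list: "(\<And>x. x \<in> set xs \<Longrightarrow> g x \<in> \<int>) \<Longrightarrow> (\<Sum>x\<leftarrow>xs. g x) \<in> \<int>"
  by (induction xs) auto

lemma sum_list_pos_imp_ex_pos:
  fixes g :: "'b \<Rightarrow> 'c::{ordered_comm_monoid_add, linorder}"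
  assumes "(\<Sum>x\<leftarrow>xs. g x) > 0"
  obtains x where "x \<in> set xs" "g x > 0"
  using sum_list_nonpos[of "map g xs"] assms by (fastforce simp: not_less)

lemma sum_list_replicate_scaleR:
  fixes v :: "'a::real_vector"
  shows "sum_list (replicate m v) = real m *\<^sub>R v"
  by (induction m) (simp_all add: scaleR_add_left)

lemma length_remove1_less: "x \<in> set xs \<Longrightarrow> length (remove1 x xs) < length xs"
  using length_pos_if_in_set[of x xs] by (simp add: length_remove1)

lemma reflection_inner_commute: "reflection \<beta> x \<bullet> y = x \<bullet> reflection \<beta> y"
  unfolding reflection_def
  by (simp add: inner_diff_left inner_diff_right algebra_simps inner_commute)

lemma reflection_self: "\<beta> \<noteq> 0 \<Longrightarrow> reflection \<beta> \<beta> = - \<beta>"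
  by (simp add: reflection_def algebra_simps scaleR_2)

lemma reflection_eq_diff_coroot: "l \<bullet> \<beta> = 1 \<Longrightarrow> reflection \<beta> l = l - coroot \<beta>"
  by (simp add: reflection_def coroot_def)

lemma coroot_inner_self: "\<beta> \<noteq> 0 \<Longrightarrow> coroot \<beta> \<bullet> \<beta> = 2"
  by (simp add: coroot_def)

lemma coroot_uminus: "coroot (- \<beta>) = - coroot \<beta>"
  by (simp add: coroot_def)

lemma inner_coroot_pos_iff:
  assumes "\<beta> \<noteq> 0" shows "l \<bullet> coroot \<beta> > 0 \<longleftrightarrow> l \<bullet> \<beta> > 0"
proof -
  have "\<beta> \<bullet> \<beta> > 0" using assms by simp
  then show ?thesis by (simp add: coroot_def field_simps)
qed

context
  fixes \<Phi> :: "'a::euclidean_space set"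
  assumes root_system: "root_system \<Phi>"
begin

lemma root_nonzero: "\<alpha> \<in> \<Phi> \<Longrightarrow> \<alpha> \<noteq> 0"
  using root_system unfolding root_system_def by auto

lemma reflection_root: "\<alpha> \<in> \<Phi> \<Longrightarrow> \<beta> \<in> \<Phi> \<Longrightarrow> reflection \<alpha> \<beta> \<in> \<Phi>"
  using root_system unfolding root_system_def by auto

lemma uminus_root: "\<alpha> \<in> \<Phi> \<Longrightarrow> - \<alpha> \<in> \<Phi>"
  using reflection_root[of \<alpha> \<alpha>] reflection_self[of \<alpha>] root_nonzero[of \<alpha>] by simp

lemma coroot_inner_root_Ints:
  assumes "\<alpha> \<in> \<Phi>" "\<beta> \<in> \<Phi>" shows "coroot \<beta> \<bullet> \<alpha> \<in> \<int>"
proof -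
  have "2 * (\<alpha> \<bullet> \<beta>) / (\<beta> \<bullet> \<beta>) \<in> \<int>"
    using root_system assms unfolding root_system_def by blast
  then show ?thesis by (simp add: coroot_def inner_commute)
qed

lemma sum_coroots_inner_root_Ints:
  "set bs \<subseteq> \<Phi> \<Longrightarrow> \<alpha> \<in> \<Phi> \<Longrightarrow> (\<Sum>\<beta>\<leftarrow>bs. coroot \<beta>) \<bullet> \<alpha> \<in> \<int>"
  unfolding inner_sum_list_left by (intro Ints_sum_list coroot_inner_root_Ints) auto

lemma sum_coroots_eq_0_if_roots_bounded:
  "set bs \<subseteq> \<Phi> \<Longrightarrow> (\<And>\<alpha>. \<alpha> \<in> \<Phi> \<Longrightarrow> \<bar>\<alpha> \<bullet> (\<Sum>\<beta>\<leftarrow>bs. coroot \<beta>)\<bar> \<le> 1)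
    \<Longrightarrow> (\<Sum>\<beta>\<leftarrow>bs. coroot \<beta>) = 0"
proof (induction "length bs" arbitrary: bs rule: less_induct)
  case less
  define l where "l = (\<Sum>\<beta>\<leftarrow>bs. coroot \<beta>)"
  show ?case
  proof (rule ccontr)
    assume "(\<Sum>\<beta>\<leftarrow>bs. coroot \<beta>) \<noteq> 0"
    then have "0 < (\<Sum>\<beta>\<leftarrow>bs. l \<bullet> coroot \<beta>)"
      by (simp add: l_def flip: inner_sum_list_right)
    then obtain \<beta> where \<beta>: "\<beta> \<in> set bs" "l \<bullet> coroot \<beta> > 0"
      by (rule sum_list_pos_imp_ex_pos)
    have \<beta>_root: "\<beta> \<in> \<Phi>" and \<beta>_nonzero: "\<beta> \<noteq> 0"
      using \<beta>(1) less.prems(1) root_nonzero by auto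
    have "l \<bullet> \<beta> \<in> \<int>"
      using sum_coroots_inner_root_Ints[OF less.prems(1) \<beta>_root] by (simp add: l_def)
    moreover have "l \<bullet> \<beta> > 0"
      using \<beta>(2) inner_coroot_pos_iff[OF \<beta>_nonzero] by simp
    moreover have "l \<bullet> \<beta> \<le> 1"
      using less.prems(2)[OF \<beta>_root] by (simp add: l_def inner_commute)
    ultimately have l_\<beta>: "l \<bullet> \<beta> = 1"
      by (auto elim!: Ints_cases)
    define bs' where "bs' = remove1 \<beta> bs"
    have l_split: "l = coroot \<beta> + (\<Sum>\<gamma>\<leftarrow>bs'. coroot \<gamma>)"
      unfolding l_def bs'_def by (rule sum_list_map_remove1[OF \<beta>(1)])
    have "(\<Sum>\<gamma>\<leftarrow>bs'. coroot \<gamma>) = 0"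
    proof (rule less.hyps)
      show "length bs' < length bs"
        unfolding bs'_def by (rule length_remove1_less[OF \<beta>(1)])
      show "set bs' \<subseteq> \<Phi>"
        unfolding bs'_def by (rule subset_trans[OF set_remove1_subset less.prems(1)])
      fix \<alpha> assume "\<alpha> \<in> \<Phi>"
      have "\<alpha> \<bullet> (\<Sum>\<gamma>\<leftarrow>bs'. coroot \<gamma>) = \<alpha> \<bullet> reflection \<beta> l"
        using reflection_eq_diff_coroot[OF l_\<beta>] l_split by simp
      also have "\<dots> = reflection \<beta> \<alpha> \<bullet> l"
        by (rule reflection_inner_commute[symmetric])
      finally show "\<bar>\<alpha> \<bullet> (\<Sum>\<gamma>\<leftarrow>bs'. coroot \<gamma>)\<bar> \<le> 1"
        using less.prems(2) reflection_root[OF \<beta>_root \<open>\<alpha> \<in> \<Phi>\<close>] by (simp add: l_def)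
    qed
    then have "l \<bullet> \<beta> = 2"
      using l_split coroot_inner_self[OF \<beta>_nonzero] by simp
    with l_\<beta> show False by simp
  qed
qed

definition coroot_sums :: "'a set" where
  "coroot_sums = {(\<Sum>\<beta>\<leftarrow>bs. coroot \<beta>) | bs. set bs \<subseteq> \<Phi>}"

lemma coroot_sums_add: "x \<in> coroot_sums \<Longrightarrow> y \<in> coroot_sums \<Longrightarrow> x + y \<in> coroot_sums"
proof -
  assume "x \<in> coroot_sums" "y \<in> coroot_sums"
  then obtain as bs where "set as \<subseteq> \<Phi>" "set bs \<subseteq> \<Phi>"
    "x = (\<Sum>\<beta>\<leftarrow>as. coroot \<beta>)" "y = (\<Sum>\<beta>\<leftarrow>bs. coroot \<beta>)"
    unfolding coroot_sums_def by blast
  then show "x + y \<in> coroot_sums"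
    unfolding coroot_sums_def by (intro CollectI exI[of _ "as @ bs"]) auto
qed

lemma int_multiple_coroot_in_coroot_sums:
  assumes "\<beta> \<in> \<Phi>"
  shows "of_int n *\<^sub>R coroot \<beta> \<in> coroot_sums"
proof (cases "n \<ge> 0")
  case True
  then have "of_int n *\<^sub>R coroot \<beta> = (\<Sum>\<gamma>\<leftarrow>replicate (nat n) \<beta>. coroot \<gamma>)"
    by (simp add: sum_list_replicate_scaleR)
  then show ?thesis
    unfolding coroot_sums_def using assms by fastforce
next
  case False
  then have "of_int n *\<^sub>R coroot \<beta> = (\<Sum>\<gamma>\<leftarrow>replicate (nat (- n)) (- \<beta>). coroot \<gamma>)"
    by (simp add: sum_list_replicate_scaleR coroot_uminus)
  then show ?thesis
    unfolding coroot_sums_def using uminus_root[OF assms] by fastforce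
qed

lemma coroot_lattice_subset_coroot_sums: "coroot_lattice \<Phi> \<subseteq> coroot_sums"
proof
  fix x assume "x \<in> coroot_lattice \<Phi>"
  then obtain c :: "'a \<Rightarrow> int" where x: "x = (\<Sum>\<alpha>\<in>\<Phi>. of_int (c \<alpha>) *\<^sub>R coroot \<alpha>)"
    unfolding coroot_lattice_def by blast
  have "finite \<Phi>"
    using root_system unfolding root_system_def by simp
  have "(\<Sum>\<alpha>\<in>F. of_int (c \<alpha>) *\<^sub>R coroot \<alpha>) \<in> coroot_sums" if "finite F" "F \<subseteq> \<Phi>" for F
    using that
  proof (induction F rule: finite_induct)
    case empty
    show ?case unfolding coroot_sums_def by (auto intro!: exI[of _ "[]"])
  next
    case (insert \<beta> F)
    then show ?case
      by (simp add: coroot_sums_add int_multiple_coroot_in_coroot_sums)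
  qed
  with \<open>finite \<Phi>\<close> show "x \<in> coroot_sums"
    unfolding x by blast
qed

lemma coroot_lattice_eq_0_if_roots_bounded:
  assumes "x \<in> coroot_lattice \<Phi>" and "\<And>\<alpha>. \<alpha> \<in> \<Phi> \<Longrightarrow> \<bar>\<alpha> \<bullet> x\<bar> \<le> 1"
  shows "x = 0"
  using assms coroot_lattice_subset_coroot_sums sum_coroots_eq_0_if_roots_bounded
  unfolding coroot_sums_def by blast

end

lemma connected_same_side_hyperplane:
  fixes C :: "'a::euclidean_space set"
  assumes "connected C" "x \<in> C" "y \<in> C" and avoid: "\<And>z. z \<in> C \<Longrightarrow> \<alpha> \<bullet> z \<noteq> c"
    and "\<alpha> \<bullet> x < c"
  shows "\<alpha> \<bullet> y < c"
proof (rule ccontr)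
  assume "\<not> \<alpha> \<bullet> y < c"
  then obtain z where "z \<in> C" "\<alpha> \<bullet> z = c"
    using connected_ivt_hyperplane[OF assms(1-3), of \<alpha> c] assms(5) by force
  with avoid show False by blast
qed

lemma connected_in_unit_strip:
  fixes C :: "'a::euclidean_space set"
  assumes "connected C" "z\<^sub>0 \<in> C" and avoid: "\<And>z k. z \<in> C \<Longrightarrow> \<alpha> \<bullet> z \<noteq> of_int k"
  obtains k :: int where "closure C \<subseteq> {z. of_int k \<le> \<alpha> \<bullet> z \<and> \<alpha> \<bullet> z \<le> of_int k + 1}"
proof
  define k where "k = \<lfloor>\<alpha> \<bullet> z\<^sub>0\<rfloor>"
  have "of_int k < \<alpha> \<bullet> z\<^sub>0"
    using avoid[OF assms(2), of k] of_int_floor_le[of "\<alpha> \<bullet> z\<^sub>0"] unfolding k_def by linarith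
  then have z\<^sub>0_strip: "(- \<alpha>) \<bullet> z\<^sub>0 < - of_int k" "\<alpha> \<bullet> z\<^sub>0 < of_int (k + 1)"
    unfolding k_def by simp_all
  have "(- \<alpha>) \<bullet> z < - of_int k" "\<alpha> \<bullet> z < of_int (k + 1)" if "z \<in> C" for z
    using connected_same_side_hyperplane[OF assms(1,2) that _ z\<^sub>0_strip(1)]
      connected_same_side_hyperplane[OF assms(1,2) that _ z\<^sub>0_strip(2)] avoid
    by (metis inner_minus_left minus_equation_iff, blast)
  then have "C \<subseteq> {z. of_int k \<le> \<alpha> \<bullet> z \<and> \<alpha> \<bullet> z \<le> of_int k + 1}"
    by fastforce
  then show "closure C \<subseteq> {z. of_int k \<le> \<alpha> \<bullet> z \<and> \<alpha> \<bullet> z \<le> of_int k + 1}"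
    by (intro closure_minimal)
      (auto simp: Collect_conj_eq intro: closed_Int closed_halfspace_ge closed_halfspace_le)
qed

lemma chamber_closure_inner_diff_bounded:
  assumes C: "C \<in> chambers (real_affine_arrangement P)" and "\<alpha> \<in> P"
    and "x \<in> closure C" "y \<in> closure C"
  shows "\<bar>\<alpha> \<bullet> (x - y)\<bar> \<le> 1"
proof -
  have "connected C" "C \<noteq> {}" and C_avoid: "C \<subseteq> UNIV - \<Union>(real_affine_arrangement P)"
    using C unfolding chambers_def
    by (auto dest: in_components_connected in_components_nonempty in_components_subset)
  moreover have "\<alpha> \<bullet> z \<noteq> of_int k" if "z \<in> C" for z k
    using C_avoid that \<open>\<alpha> \<in> P\<close> unfolding real_affine_arrangement_def by blast
  ultimately obtain k :: int
    where "closure C \<subseteq> {z. of_int k \<le> \<alpha> \<bullet> z \<and> \<alpha> \<bullet> z \<le> of_int k + 1}"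
    using connected_in_unit_strip by blast
  with assms(3,4) have "of_int k \<le> \<alpha> \<bullet> x" "\<alpha> \<bullet> x \<le> of_int k + 1"
    "of_int k \<le> \<alpha> \<bullet> y" "\<alpha> \<bullet> y \<le> of_int k + 1"
    by auto
  then show ?thesis
    by (simp add: inner_diff_right)
qed

lemma positive_system_root_or_uminus:
  assumes "root_system \<Phi>" "positive_system \<Phi> P" "\<alpha> \<in> \<Phi>"
  shows "\<alpha> \<in> P \<or> - \<alpha> \<in> P"
  using assms uminus_root[OF assms(1,3)] unfolding positive_system_def
  by (auto simp: neq_iff)

theorem mainTheorem4:
  fixes \<Phi> P :: "'a::euclidean_space set"
  assumes "root_system \<Phi>"
    and "positive_system \<Phi> P"
  shows "thick (coroot_lattice \<Phi>) P"
  unfolding thick_def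
proof (intro ballI impI)
  fix C x y
  assume C: "C \<in> chambers (real_affine_arrangement P)"
    and xy: "x \<in> closure C" "y \<in> closure C" "x - y \<in> coroot_lattice \<Phi>"
  have "\<bar>\<alpha> \<bullet> (x - y)\<bar> \<le> 1" if "\<alpha> \<in> \<Phi>" for \<alpha>
    using positive_system_root_or_uminus[OF assms that]
  proof
    assume "- \<alpha> \<in> P"
    from chamber_closure_inner_diff_bounded[OF C this xy(1,2)] show ?thesis by simp
  qed (rule chamber_closure_inner_diff_bounded[OF C _ xy(1,2)])
  then have "x - y = 0"
    using coroot_lattice_eq_0_if_roots_bounded[OF assms(1) xy(3)] by blast
  then show "x = y" by simp
qed

end
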